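(* Let $X,Y$ be finite nonempty sets, $\alpha>0$, and let $A\in\mathbb{R}^{X\times Y}$ satisfy $\operatorname{Ldim}_\alpha(A)=d$, $\|A\|_{\gamma_2}=\gamma$ and $\max_{x,y}|A(x,y)|=M$. Then $$\gamma\ge\frac{\alpha\sqrt d}{2(M+1)}-1 .$$ Consequently (since $M\le\gamma$), $d\le 4(\gamma+1)^4/\alpha^2$; in particular $d=O_\alpha(\gamma^4)$.
   Context: The $\gamma_2$ factorization norm of a matrix $A$ is $\|A\|_{\gamma_2}=\min_{UV=A}\|U\|_{\mathrm{row}}\|V\|_{\mathrm{col}}$, where the minimum is over all factorizations $A=UV$, $\|U\|_{\mathrm{row}}$ is the largest Euclidean norm of a row of $U$ and $\|V\|_{\mathrm{col}}$ the largest Euclidean norm of a column of $V$. A weighted mistake tree of depth $d$ over $X$ is a complete binary tree of depth $d$ in which each internal node $\nu$ is labelled by $x(\nu)\in X$ and a real number $w(\nu)$, with a designated left and right child. $A$ $\alpha$-shatters it if for every root-to-leaf path $(\nu_1,\dots,\nu_{d+1})$ there is $y\in Y$ such that for all $1\le i\le d$: $A(x(\nu_i),y)\ge w(\nu_i)+\alpha/2$ if $\nu_{i+1}$ is the left child of $\nu_i$, and $A(x(\nu_i),y)\le w(\nu_i)-\alpha/2$ if $\nu_{i+1}$ is the right child. $\operatorname{Ldim}_\alpha(A)$ is the largest $d$ such that some weighted mistake tree of depth $d$ is $\alpha$-shattered by $A$. *)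

theory Defs
  imports Complex_Main
begin

text \<open>A matrix indexed by X \<times> Y is a function A :: 'x \<Rightarrow> 'y \<Rightarrow> real, considered on X \<times> Y.\<close>

definition row_norm :: "'x set \<Rightarrow> nat \<Rightarrow> ('x \<Rightarrow> nat \<Rightarrow> real) \<Rightarrow> real" where
  "row_norm X k U = Max ((\<lambda>x. sqrt (\<Sum>i<k. (U x i)^2)) ` X)"

definition col_norm :: "'y set \<Rightarrow> nat \<Rightarrow> (nat \<Rightarrow> 'y \<Rightarrow> real) \<Rightarrow> real" where
  "col_norm Y k V = Max ((\<lambda>y. sqrt (\<Sum>i<k. (V i y)^2)) ` Y)"

definition is_factorization ::
  "'x set \<Rightarrow> 'y set \<Rightarrow> ('x \<Rightarrow> 'y \<Rightarrow> real) \<Rightarrow> nat \<Rightarrow> ('x \<Rightarrow> nat \<Rightarrow> real) \<Rightarrow> (nat \<Rightarrow> 'y \<Rightarrow> real) \<Rightarrow> bool" where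
  "is_factorization X Y A k U V \<longleftrightarrow> (\<forall>x\<in>X. \<forall>y\<in>Y. A x y = (\<Sum>i<k. U x i * V i y))"

definition gamma2 :: "'x set \<Rightarrow> 'y set \<Rightarrow> ('x \<Rightarrow> 'y \<Rightarrow> real) \<Rightarrow> real" where
  "gamma2 X Y A = Inf {row_norm X k U * col_norm Y k V | k U V. is_factorization X Y A k U V}"

text \<open>Weighted mistake tree of depth d: nodes are boolean lists (addresses from the root),
  internal nodes are those of length < d; label xl and weight w on internal nodes.
  A root-to-leaf path is a boolean list p of length d; the i-th node on the path is take i p,
  and p ! i = True means the path goes to the left child.\<close>

definition shatters ::
  "'x set \<Rightarrow> 'y set \<Rightarrow> ('x \<Rightarrow> 'y \<Rightarrow> real) \<Rightarrow> real \<Rightarrow> nat \<Rightarrow> (bool list \<Rightarrow> 'x) \<Rightarrow> (bool list \<Rightarrow> real) \<Rightarrow> bool" where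
  "shatters X Y A \<alpha> d xl w \<longleftrightarrow>
     (\<forall>\<nu>. length \<nu> < d \<longrightarrow> xl \<nu> \<in> X) \<and>
     (\<forall>p. length p = d \<longrightarrow> (\<exists>y\<in>Y. \<forall>i<d.
        (p ! i \<longrightarrow> A (xl (take i p)) y \<ge> w (take i p) + \<alpha> / 2) \<and>
        (\<not> p ! i \<longrightarrow> A (xl (take i p)) y \<le> w (take i p) - \<alpha> / 2)))"

definition Ldim :: "'x set \<Rightarrow> 'y set \<Rightarrow> real \<Rightarrow> ('x \<Rightarrow> 'y \<Rightarrow> real) \<Rightarrow> nat" where
  "Ldim X Y \<alpha> A = (GREATEST d. \<exists>xl w. shatters X Y A \<alpha> d xl w)"

end

theory Submission
  imports Defs "HOL-Analysis.Convex"
begin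

text \<open>Factor \<open>A = U V\<close> with row norms at most \<open>r\<close> and column norms at most \<open>c\<close>, rescaled so
  that both become \<open>\<surd>(r c)\<close>. Appending the weight \<open>w \<nu>\<close> to the row of \<open>xl \<nu>\<close> and \<open>-1\<close> to
  every column turns shattering into a margin condition: along every path, some column vector
  \<open>v\<close> with \<open>|v|\<^sup>2 \<le> r c + 1\<close> has \<open>\<pm>\<langle>u \<nu>, v\<rangle> \<ge> \<alpha> / 2\<close> at each node \<open>\<nu>\<close> of the path, where
  \<open>|u \<nu>|\<^sup>2 \<le> r c + M\<^sup>2\<close>. Walk down the tree choosing each direction so that the new signed
  term makes a nonpositive angle with the signed sum \<open>G\<close> of the vectors met so far; then
  \<open>|G|\<^sup>2 \<le> d (r c + M\<^sup>2)\<close>. Summing the margins along this path and applying Cauchy-Schwarz gives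
  \<open>d \<alpha> / 2 \<le> \<langle>G, v\<rangle> \<le> \<surd>(d (r c + M\<^sup>2) (r c + 1))\<close>, hence
  \<open>d \<alpha>\<^sup>2 \<le> 4 (r c + M\<^sup>2) (r c + 1) \<le> (2 (M + 1) (r c + 1))\<^sup>2\<close>, and it remains to take the infimum
  over all factorizations.\<close>

section \<open>Depth of trees shattered by inner products with a margin\<close>

definition sgn_of_bool :: "bool \<Rightarrow> real" where
  "sgn_of_bool b = (if b then 1 else -1)"

lemma sgn_of_bool_sq [simp]: "(sgn_of_bool b)\<^sup>2 = 1"
  by (simp add: sgn_of_bool_def)

definition signed_sum :: "(bool list \<Rightarrow> nat \<Rightarrow> real) \<Rightarrow> bool list \<Rightarrow> nat \<Rightarrow> real" where
  "signed_sum u p j = (\<Sum>i<length p. sgn_of_bool (p ! i) * u (take i p) j)"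

lemma signed_sum_snoc: "signed_sum u (p @ [b]) j = signed_sum u p j + sgn_of_bool b * u p j"
proof -
  have "(\<Sum>i<length p. sgn_of_bool ((p @ [b]) ! i) * u (take i (p @ [b])) j) = signed_sum u p j"
    unfolding signed_sum_def by (rule sum.cong) (auto simp: nth_append)
  then show ?thesis
    by (simp add: signed_sum_def)
qed

primrec greedy_path :: "nat \<Rightarrow> (bool list \<Rightarrow> nat \<Rightarrow> real) \<Rightarrow> nat \<Rightarrow> bool list" where
  "greedy_path k u 0 = []"
| "greedy_path k u (Suc n) =
     greedy_path k u n @
       [(\<Sum>j<k. signed_sum u (greedy_path k u n) j * u (greedy_path k u n) j) \<le> 0]"

lemma length_greedy_path [simp]: "length (greedy_path k u n) = n"
  by (induction n) auto

lemma sum_sq_signed_sum_greedy_path: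
  assumes "\<And>\<nu>. length \<nu> < n \<Longrightarrow> (\<Sum>j<k. (u \<nu> j)\<^sup>2) \<le> R2"
  shows "(\<Sum>j<k. (signed_sum u (greedy_path k u n) j)\<^sup>2) \<le> n * R2"
  using assms
proof (induction n)
  case 0
  then show ?case
    by (simp add: signed_sum_def)
next
  case (Suc n)
  define p where "p = greedy_path k u n"
  define s where "s = sgn_of_bool ((\<Sum>j<k. signed_sum u p j * u p j) \<le> 0)"
  have cross: "s * (\<Sum>j<k. signed_sum u p j * u p j) \<le> 0"
    by (simp add: s_def sgn_of_bool_def)
  have "(\<Sum>j<k. (signed_sum u (greedy_path k u (Suc n)) j)\<^sup>2)
      = (\<Sum>j<k. (signed_sum u p j)\<^sup>2 + 2 * s * (signed_sum u p j * u p j) + (u p j)\<^sup>2)"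
    unfolding p_def [symmetric] s_def [symmetric] greedy_path.simps
    by (rule sum.cong) (simp_all add: s_def signed_sum_snoc power2_sum power_mult_distrib)
  also have "\<dots> = (\<Sum>j<k. (signed_sum u p j)\<^sup>2) + 2 * (s * (\<Sum>j<k. signed_sum u p j * u p j))
        + (\<Sum>j<k. (u p j)\<^sup>2)"
    by (simp add: sum.distrib sum_distrib_left mult.assoc)
  also have "\<dots> \<le> n * R2 + 0 + R2"
    using Suc cross by (intro add_mono) (auto simp: p_def)
  finally show ?case
    by (simp add: algebra_simps)
qed

lemma margin_tree_depth_bound:
  fixes u :: "bool list \<Rightarrow> nat \<Rightarrow> real"
  assumes norm_u: "\<And>\<nu>. length \<nu> < d \<Longrightarrow> (\<Sum>j<k. (u \<nu> j)\<^sup>2) \<le> R2"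
    and margin: "\<And>p. length p = d \<Longrightarrow> \<exists>v. (\<Sum>j<k. (v j)\<^sup>2) \<le> C2 \<and>
        (\<forall>i<d. \<alpha> / 2 \<le> sgn_of_bool (p ! i) * (\<Sum>j<k. u (take i p) j * v j))"
    and "0 \<le> \<alpha>" "0 < d"
  shows "real d * \<alpha>\<^sup>2 \<le> 4 * R2 * C2"
proof -
  define p where "p = greedy_path k u d"
  obtain v where v: "(\<Sum>j<k. (v j)\<^sup>2) \<le> C2"
    and v_margin: "\<And>i. i < d \<Longrightarrow> \<alpha> / 2 \<le> sgn_of_bool (p ! i) * (\<Sum>j<k. u (take i p) j * v j)"
    using margin [of p] by (auto simp: p_def)
  have "real d * (\<alpha> / 2) \<le> (\<Sum>i<d. sgn_of_bool (p ! i) * (\<Sum>j<k. u (take i p) j * v j))"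
    using sum_mono [of "{..<d}" "\<lambda>_. \<alpha> / 2"] v_margin by simp
  also have "\<dots> = (\<Sum>j<k. signed_sum u p j * v j)"
    by (simp add: signed_sum_def p_def sum_distrib_left sum_distrib_right sum.swap [of _ "{..<k}"]
        mult.assoc)
  finally have "(real d * (\<alpha> / 2))\<^sup>2 \<le> (\<Sum>j<k. signed_sum u p j * v j)\<^sup>2"
    using \<open>0 \<le> \<alpha>\<close> by (intro power_mono) auto
  also have "\<dots> \<le> (\<Sum>j<k. (signed_sum u p j)\<^sup>2) * (\<Sum>j<k. (v j)\<^sup>2)"
    by (rule Cauchy_Schwarz_ineq_sum)
  also have "\<dots> \<le> (real d * R2) * C2"
  proof (intro mult_mono)
    show "(\<Sum>j<k. (signed_sum u p j)\<^sup>2) \<le> real d * R2"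
      unfolding p_def by (rule sum_sq_signed_sum_greedy_path) (rule norm_u)
    show "0 \<le> real d * R2"
      using norm_u [of "[]"] \<open>0 < d\<close> sum_nonneg [of "{..<k}" "\<lambda>j. (u [] j)\<^sup>2"] by simp
  qed (use v in \<open>auto simp: sum_nonneg\<close>)
  finally have "real d * (real d * \<alpha>\<^sup>2) \<le> real d * (4 * R2 * C2)"
    by (simp add: power2_eq_square algebra_simps)
  then show ?thesis
    using \<open>0 < d\<close> by simp
qed

section \<open>Shattered weighted mistake trees\<close>

lemma shatters_label:
  assumes "shatters X Y A \<alpha> d xl w" "length \<nu> < d"
  shows "xl \<nu> \<in> X"
  using assms by (simp add: shatters_def)

lemma shatters_witness:
  assumes "shatters X Y A \<alpha> d xl w" "length p = d"
  obtains y where "y \<in> Y"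
    and "\<And>i. i < d \<Longrightarrow> \<alpha> / 2 \<le> sgn_of_bool (p ! i) * (A (xl (take i p)) y - w (take i p))"
proof -
  obtain y where "y \<in> Y" and y: "\<forall>i<d.
      (p ! i \<longrightarrow> A (xl (take i p)) y \<ge> w (take i p) + \<alpha> / 2) \<and>
      (\<not> p ! i \<longrightarrow> A (xl (take i p)) y \<le> w (take i p) - \<alpha> / 2)"
    using assms unfolding shatters_def by blast
  have "\<alpha> / 2 \<le> sgn_of_bool (p ! i) * (A (xl (take i p)) y - w (take i p))" if "i < d" for i
    using y that by (cases "p ! i") (auto simp: sgn_of_bool_def)
  with \<open>y \<in> Y\<close> show thesis
    using that by blast
qed

lemma shatters_node_split:
  assumes "shatters X Y A \<alpha> d xl w" "length \<nu> < d"
  obtains y1 y2 where "y1 \<in> Y" "y2 \<in> Y"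
    and "w \<nu> + \<alpha> / 2 \<le> A (xl \<nu>) y1" "A (xl \<nu>) y2 \<le> w \<nu> - \<alpha> / 2"
proof -
  define p where "p b = \<nu> @ replicate (d - length \<nu>) b" for b
  have p: "length (p b) = d" "take (length \<nu>) (p b) = \<nu>" "p b ! length \<nu> = b" for b
    using assms(2) by (simp_all add: p_def nth_append)
  obtain y1 where "y1 \<in> Y" "\<alpha> / 2 \<le> sgn_of_bool True * (A (xl \<nu>) y1 - w \<nu>)"
    using shatters_witness [OF assms(1) p(1)] assms(2) p(2,3) by metis
  moreover obtain y2 where "y2 \<in> Y" "\<alpha> / 2 \<le> sgn_of_bool False * (A (xl \<nu>) y2 - w \<nu>)"
    using shatters_witness [OF assms(1) p(1)] assms(2) p(2,3) by metis
  ultimately show thesis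
    using that by (simp add: sgn_of_bool_def)
qed

lemma shatters_weight_bound:
  assumes "shatters X Y A \<alpha> d xl w" "length \<nu> < d"
    and "\<And>x y. x \<in> X \<Longrightarrow> y \<in> Y \<Longrightarrow> \<bar>A x y\<bar> \<le> B"
  shows "\<bar>w \<nu>\<bar> \<le> B - \<alpha> / 2"
proof -
  obtain y1 y2 where "y1 \<in> Y" "y2 \<in> Y"
    and "w \<nu> + \<alpha> / 2 \<le> A (xl \<nu>) y1" "A (xl \<nu>) y2 \<le> w \<nu> - \<alpha> / 2"
    using shatters_node_split [OF assms(1,2)] .
  moreover have "\<bar>A (xl \<nu>) y1\<bar> \<le> B" "\<bar>A (xl \<nu>) y2\<bar> \<le> B"
    using assms(3) shatters_label [OF assms(1,2)] \<open>y1 \<in> Y\<close> \<open>y2 \<in> Y\<close> by auto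
  ultimately show ?thesis
    by linarith
qed

lemma shatters_margin_le:
  assumes "shatters X Y A \<alpha> d xl w" "0 < d"
    and "\<And>x y. x \<in> X \<Longrightarrow> y \<in> Y \<Longrightarrow> \<bar>A x y\<bar> \<le> B"
  shows "\<alpha> / 2 \<le> B"
  using shatters_weight_bound [of X Y A \<alpha> d xl w "[]" B] assms by fastforce

text \<open>The paths that go right for the first \<open>m\<close> steps and left afterwards, \<open>m \<le> d\<close>,
  need pairwise distinct witnesses.\<close>
lemma shatters_depth_less_card:
  assumes "shatters X Y A \<alpha> d xl w" "finite Y" "0 < \<alpha>"
  shows "d < card Y"
proof -
  define q where "q m = replicate m False @ replicate (d - m) True" for m
  have "\<exists>y\<in>Y. \<forall>i<d. \<alpha> / 2 \<le> sgn_of_bool (q m ! i) * (A (xl (take i (q m))) y - w (take i (q m)))"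
    if "m \<le> d" for m
    using shatters_witness [OF assms(1), of "q m"] that by (metis q_def length_append
        length_replicate le_add_diff_inverse)
  then obtain f where f: "\<And>m. m \<le> d \<Longrightarrow> f m \<in> Y"
    and f_margin: "\<And>m i. m \<le> d \<Longrightarrow> i < d \<Longrightarrow>
      \<alpha> / 2 \<le> sgn_of_bool (q m ! i) * (A (xl (take i (q m))) (f m) - w (take i (q m)))"
    by metis
  have "f m \<noteq> f m'" if "m < m'" "m' \<le> d" for m m'
  proof
    assume "f m = f m'"
    have "take m (q m) = replicate m False" "take m (q m') = replicate m False"
      "q m ! m" "\<not> q m' ! m"
      using that by (simp_all add: q_def nth_append)
    then show False
      using f_margin [of m m] f_margin [of m' m] that \<open>f m = f m'\<close> \<open>0 < \<alpha>\<close>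
      by (simp add: sgn_of_bool_def)
  qed
  then have "inj_on f {..d}"
    by (intro linorder_inj_onI') auto
  then have "card {..d} \<le> card Y"
    using f \<open>finite Y\<close> by (intro card_inj_on_le) auto
  then show ?thesis
    by simp
qed

lemma Ldim_shattered:
  assumes "finite Y" "Y \<noteq> {}" "0 < \<alpha>"
  shows "\<exists>xl w. shatters X Y A \<alpha> (Ldim X Y \<alpha> A) xl w"
  unfolding Ldim_def
proof (rule GreatestI_nat)
  show "\<exists>xl w. shatters X Y A \<alpha> 0 xl w"
    using assms(2) by (auto simp: shatters_def)
  show "n \<le> card Y" if "\<exists>xl w. shatters X Y A \<alpha> n xl w" for n
    using that shatters_depth_less_card assms(1,3) by (metis less_imp_le)
qed

section \<open>Factorizations\<close>

lemma is_factorization_exists: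
  assumes "finite X"
  shows "\<exists>k U V. is_factorization X Y A k U V"
proof -
  obtain h where h: "bij_betw h {..<card X} X"
    using ex_bij_betw_nat_finite [OF assms] lessThan_atLeast0 by metis
  define U where "U x i = (if h i = x then 1 else 0 :: real)" for x i
  define V where "V i y = A (h i) y" for i y
  have "A x y = (\<Sum>i<card X. U x i * V i y)" if "x \<in> X" for x y
  proof -
    have "(\<Sum>i<card X. U x i * V i y) = (\<Sum>i<card X. (\<lambda>x'. if x' = x then A x' y else 0) (h i))"
      by (rule sum.cong) (simp_all add: U_def V_def)
    also have "\<dots> = (\<Sum>x'\<in>X. if x' = x then A x' y else 0)"
      by (rule sum.reindex_bij_betw [OF h])
    also have "\<dots> = A x y"
      using that assms by simp
    finally show ?thesis
      by simp
  qed
  then show ?thesis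
    unfolding is_factorization_def by blast
qed

lemma sum_sq_le_row_norm:
  assumes "finite X" "x \<in> X"
  shows "(\<Sum>j<k. (U x j)\<^sup>2) \<le> (row_norm X k U)\<^sup>2"
proof -
  have "sqrt (\<Sum>j<k. (U x j)\<^sup>2) \<le> row_norm X k U"
    unfolding row_norm_def using assms by (intro Max_ge) auto
  then show ?thesis
    by (rule sqrt_le_D)
qed

lemma sum_sq_le_col_norm:
  assumes "finite Y" "y \<in> Y"
  shows "(\<Sum>j<k. (V j y)\<^sup>2) \<le> (col_norm Y k V)\<^sup>2"
proof -
  have "sqrt (\<Sum>j<k. (V j y)\<^sup>2) \<le> col_norm Y k V"
    unfolding col_norm_def using assms by (intro Max_ge) auto
  then show ?thesis
    by (rule sqrt_le_D)
qed

lemma row_norm_nonneg: "finite X \<Longrightarrow> X \<noteq> {} \<Longrightarrow> 0 \<le> row_norm X k U"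
  unfolding row_norm_def by (subst Max_ge_iff) (auto simp: sum_nonneg)

lemma col_norm_nonneg: "finite Y \<Longrightarrow> Y \<noteq> {} \<Longrightarrow> 0 \<le> col_norm Y k V"
  unfolding col_norm_def by (subst Max_ge_iff) (auto simp: sum_nonneg)

lemma abs_le_row_norm_mult_col_norm:
  assumes "is_factorization X Y A k U V" "finite X" "finite Y" "x \<in> X" "y \<in> Y"
  shows "\<bar>A x y\<bar> \<le> row_norm X k U * col_norm Y k V"
proof (rule power2_le_imp_le)
  have "\<bar>A x y\<bar>\<^sup>2 = (\<Sum>j<k. U x j * V j y)\<^sup>2"
    using assms(1,4,5) by (simp add: is_factorization_def)
  also have "\<dots> \<le> (\<Sum>j<k. (U x j)\<^sup>2) * (\<Sum>j<k. (V j y)\<^sup>2)"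
    by (rule Cauchy_Schwarz_ineq_sum)
  also have "\<dots> \<le> (row_norm X k U)\<^sup>2 * (col_norm Y k V)\<^sup>2"
    using assms by (intro mult_mono sum_sq_le_row_norm sum_sq_le_col_norm) (auto simp: sum_nonneg)
  finally show "\<bar>A x y\<bar>\<^sup>2 \<le> (row_norm X k U * col_norm Y k V)\<^sup>2"
    by (simp add: power_mult_distrib)
  show "0 \<le> row_norm X k U * col_norm Y k V"
    using assms by (auto intro!: mult_nonneg_nonneg row_norm_nonneg col_norm_nonneg)
qed

definition augment :: "nat \<Rightarrow> (nat \<Rightarrow> real) \<Rightarrow> real \<Rightarrow> nat \<Rightarrow> real" where
  "augment k a t j = (if j < k then a j else t)"

lemma sum_sq_augment: "(\<Sum>j<Suc k. (augment k a t j)\<^sup>2) = (\<Sum>j<k. (a j)\<^sup>2) + t\<^sup>2"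
  by (simp add: augment_def)

lemma sum_mult_augment:
  "(\<Sum>j<Suc k. augment k a t j * augment k b t' j) = (\<Sum>j<k. a j * b j) + t * t'"
  by (simp add: augment_def)

lemma depth_bound_by_scaled_factorization:
  assumes sh: "shatters X Y A \<alpha> d xl w" and fac: "is_factorization X Y A k U V"
    and "0 < \<alpha>" "0 < d" "0 < s"
    and rows: "\<And>x. x \<in> X \<Longrightarrow> (\<Sum>j<k. (U x j)\<^sup>2) \<le> R2"
    and cols: "\<And>y. y \<in> Y \<Longrightarrow> (\<Sum>j<k. (V j y)\<^sup>2) \<le> C2"
    and M: "\<And>x y. x \<in> X \<Longrightarrow> y \<in> Y \<Longrightarrow> \<bar>A x y\<bar> \<le> M"
  shows "real d * \<alpha>\<^sup>2 \<le> 4 * (s\<^sup>2 * R2 + M\<^sup>2) * (C2 / s\<^sup>2 + 1)"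
proof (rule margin_tree_depth_bound [where u = "\<lambda>\<nu>. augment k (\<lambda>j. s * U (xl \<nu>) j) (w \<nu>)"
      and k = "Suc k"])
  fix \<nu> :: "bool list"
  assume "length \<nu> < d"
  have "s\<^sup>2 * (\<Sum>j<k. (U (xl \<nu>) j)\<^sup>2) \<le> s\<^sup>2 * R2"
    using rows [OF shatters_label [OF sh \<open>length \<nu> < d\<close>]] by (simp add: mult_left_mono)
  moreover have "(w \<nu>)\<^sup>2 \<le> M\<^sup>2"
    using shatters_weight_bound [OF sh \<open>length \<nu> < d\<close> M] \<open>0 < \<alpha>\<close> by (intro power2_mono) simp
  ultimately show "(\<Sum>j<Suc k. (augment k (\<lambda>j. s * U (xl \<nu>) j) (w \<nu>) j)\<^sup>2) \<le> s\<^sup>2 * R2 + M\<^sup>2"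
    unfolding sum_sq_augment by (simp add: power_mult_distrib sum_distrib_left)
next
  fix p :: "bool list"
  assume "length p = d"
  then obtain y where "y \<in> Y" and y:
    "\<And>i. i < d \<Longrightarrow> \<alpha> / 2 \<le> sgn_of_bool (p ! i) * (A (xl (take i p)) y - w (take i p))"
    using shatters_witness [OF sh] by blast
  define v where "v = augment k (\<lambda>j. V j y / s) (-1)"
  have "(\<Sum>j<Suc k. (v j)\<^sup>2) \<le> C2 / s\<^sup>2 + 1"
    using cols [OF \<open>y \<in> Y\<close>] unfolding v_def sum_sq_augment
    by (simp add: power_divide divide_right_mono flip: sum_divide_distrib)
  moreover have "(\<Sum>j<Suc k. augment k (\<lambda>j. s * U (xl (take i p)) j) (w (take i p)) j * v j)
      = A (xl (take i p)) y - w (take i p)" if "i < d" for i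
    using fac shatters_label [OF sh, of "take i p"] \<open>y \<in> Y\<close> \<open>length p = d\<close> that \<open>0 < s\<close>
    unfolding v_def sum_mult_augment by (simp add: is_factorization_def)
  ultimately show "\<exists>v. (\<Sum>j<Suc k. (v j)\<^sup>2) \<le> C2 / s\<^sup>2 + 1 \<and> (\<forall>i<d. \<alpha> / 2 \<le> sgn_of_bool (p ! i) *
      (\<Sum>j<Suc k. augment k (\<lambda>j. s * U (xl (take i p)) j) (w (take i p)) j * v j))"
    using y by auto
qed (use \<open>0 < \<alpha>\<close> \<open>0 < d\<close> in auto)

lemma depth_bound_by_factorization:
  assumes sh: "shatters X Y A \<alpha> d xl w" and fac: "is_factorization X Y A k U V"
    and X: "finite X" "X \<noteq> {}" and Y: "finite Y" "Y \<noteq> {}" and "0 < \<alpha>" "0 < d"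
    and M: "\<And>x y. x \<in> X \<Longrightarrow> y \<in> Y \<Longrightarrow> \<bar>A x y\<bar> \<le> M"
  shows "real d * \<alpha>\<^sup>2
    \<le> 4 * (row_norm X k U * col_norm Y k V + M\<^sup>2) * (row_norm X k U * col_norm Y k V + 1)"
proof -
  define r c where "r = row_norm X k U" and "c = col_norm Y k V"
  have "\<alpha> / 2 \<le> r * c"
    using shatters_margin_le [OF sh \<open>0 < d\<close> abs_le_row_norm_mult_col_norm [OF fac X(1) Y(1)]]
    by (simp add: r_def c_def)
  then have "0 < r * c"
    using \<open>0 < \<alpha>\<close> by linarith
  moreover have "0 \<le> r" "0 \<le> c"
    using row_norm_nonneg [OF X] col_norm_nonneg [OF Y] by (simp_all add: r_def c_def)
  ultimately have "0 < r" "0 < c"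
    by (simp_all add: zero_less_mult_iff)
  define s where "s = sqrt (c / r)"
  have "s\<^sup>2 * r\<^sup>2 = r * c" "c\<^sup>2 / s\<^sup>2 = r * c" "0 < s"
    using \<open>0 < r\<close> \<open>0 < c\<close> by (simp_all add: s_def power2_eq_square)
  then show ?thesis
    using depth_bound_by_scaled_factorization [OF sh fac \<open>0 < \<alpha>\<close> \<open>0 < d\<close> \<open>0 < s\<close> _ _ M,
        of "r\<^sup>2" "c\<^sup>2"] sum_sq_le_row_norm [OF X(1)] sum_sq_le_col_norm [OF Y(1)]
    by (simp add: r_def c_def)
qed

lemma factorization_norm_product_lower_bound:
  assumes sh: "shatters X Y A \<alpha> d xl w" and fac: "is_factorization X Y A k U V"
    and X: "finite X" "X \<noteq> {}" and Y: "finite Y" "Y \<noteq> {}" and "0 < \<alpha>" "0 \<le> M"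
    and M: "\<And>x y. x \<in> X \<Longrightarrow> y \<in> Y \<Longrightarrow> \<bar>A x y\<bar> \<le> M"
  shows "\<alpha> * sqrt (real d) / (2 * (M + 1)) - 1 \<le> row_norm X k U * col_norm Y k V"
proof -
  define p where "p = row_norm X k U * col_norm Y k V"
  have "0 \<le> p"
    using row_norm_nonneg [OF X] col_norm_nonneg [OF Y] by (simp add: p_def)
  have "\<alpha> * sqrt (real d) \<le> 2 * (M + 1) * (p + 1)"
  proof (cases "d = 0")
    case True
    then show ?thesis
      using \<open>0 \<le> M\<close> \<open>0 \<le> p\<close> by simp
  next
    case False
    have "p + M\<^sup>2 \<le> (M + 1)\<^sup>2 * (p + 1)"
      using \<open>0 \<le> M\<close> \<open>0 \<le> p\<close> by (simp add: power2_eq_square algebra_simps)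
    then have "4 * (p + M\<^sup>2) * (p + 1) \<le> 4 * ((M + 1)\<^sup>2 * (p + 1)) * (p + 1)"
      using \<open>0 \<le> p\<close> by (intro mult_right_mono) auto
    also have "\<dots> = (2 * (M + 1) * (p + 1))\<^sup>2"
      by (simp add: power2_eq_square algebra_simps)
    finally have "real d * \<alpha>\<^sup>2 \<le> (2 * (M + 1) * (p + 1))\<^sup>2"
      using depth_bound_by_factorization [OF sh fac X Y \<open>0 < \<alpha>\<close> _ M] False
      by (simp add: p_def)
    then have "sqrt (real d * \<alpha>\<^sup>2) \<le> 2 * (M + 1) * (p + 1)"
      using \<open>0 \<le> M\<close> \<open>0 \<le> p\<close> by (intro real_le_lsqrt) auto
    then show ?thesis
      using \<open>0 < \<alpha>\<close> by (simp add: real_sqrt_mult mult.commute)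
  qed
  then have "\<alpha> * sqrt (real d) / (2 * (M + 1)) \<le> p + 1"
    using \<open>0 \<le> M\<close> by (subst pos_divide_le_eq) (auto simp: mult.commute)
  then show ?thesis
    by (simp add: p_def)
qed

lemma gamma2_greatest:
  assumes "finite X"
    and "\<And>k U V. is_factorization X Y A k U V \<Longrightarrow> b \<le> row_norm X k U * col_norm Y k V"
  shows "b \<le> gamma2 X Y A"
  unfolding gamma2_def
  using is_factorization_exists [OF assms(1), of Y A] assms(2) by (auto intro!: cInf_greatest)

lemma abs_le_gamma2:
  assumes "finite X" "finite Y" "x \<in> X" "y \<in> Y"
  shows "\<bar>A x y\<bar> \<le> gamma2 X Y A"
  using assms by (intro gamma2_greatest abs_le_row_norm_mult_col_norm)

theorem proposition3p2:
  fixes X :: "'x set" and Y :: "'y set" and A :: "'x \<Rightarrow> 'y \<Rightarrow> real"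
    and \<alpha> \<gamma> M :: real and d :: nat
  assumes "finite X" "X \<noteq> {}" "finite Y" "Y \<noteq> {}"
    and "\<alpha> > 0"
    and "Ldim X Y \<alpha> A = d"
    and "gamma2 X Y A = \<gamma>"
    and "M = Max ((\<lambda>(x, y). \<bar>A x y\<bar>) ` (X \<times> Y))"
  shows "\<gamma> \<ge> \<alpha> * sqrt (real d) / (2 * (M + 1)) - 1 \<and>
         real d \<le> 4 * (\<gamma> + 1) ^ 4 / \<alpha> ^ 2"
proof -
  obtain xl w where sh: "shatters X Y A \<alpha> d xl w"
    using Ldim_shattered [OF assms(3-5)] assms(6) by blast
  have M: "\<bar>A x y\<bar> \<le> M" if "x \<in> X" "y \<in> Y" for x y
    unfolding assms(8) using that assms(1,3) by (intro Max_ge) auto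
  then have "0 \<le> M"
    using assms(2,4) by (meson abs_ge_zero all_not_in_conv order_trans)
  have "M \<le> \<gamma>"
    unfolding assms(8) assms(7) [symmetric] using assms(1-4) by (auto intro!: Max.boundedI abs_le_gamma2)
  have lower: "\<alpha> * sqrt (real d) / (2 * (M + 1)) - 1 \<le> \<gamma>"
    unfolding assms(7) [symmetric] using assms(1)
    by (rule gamma2_greatest) (rule factorization_norm_product_lower_bound [OF sh _ assms(1-5) \<open>0 \<le> M\<close> M])
  have "\<alpha> * sqrt (real d) = \<alpha> * sqrt (real d) / (2 * (M + 1)) * (2 * (M + 1))"
    using \<open>0 \<le> M\<close> by simp
  also have "\<dots> \<le> (\<gamma> + 1) * (2 * (M + 1))"
    using lower \<open>0 \<le> M\<close> by (intro mult_right_mono) auto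
  also have "\<dots> \<le> (\<gamma> + 1) * (2 * (\<gamma> + 1))"
    using \<open>0 \<le> M\<close> \<open>M \<le> \<gamma>\<close> by (intro mult_left_mono) auto
  finally have "(\<alpha> * sqrt (real d))\<^sup>2 \<le> ((\<gamma> + 1) * (2 * (\<gamma> + 1)))\<^sup>2"
    using \<open>0 < \<alpha>\<close> by (intro power_mono) auto
  also have "\<dots> = 4 * (\<gamma> + 1) ^ 4"
    by algebra
  finally show ?thesis
    using lower \<open>0 < \<alpha>\<close> by (simp add: pos_le_divide_eq power_mult_distrib mult.commute)
qed

end
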